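(* Let $n\geq1$ and $j\geq0$ be integers. (i) If $n$ is even, then $\widehat{A}_n(q^{j},q)$ is divisible in $\mathbb{Z}[q]$ by $(1+q)^{\lfloor n/2\rfloor}$ when $j$ is even, and by $(1+q)^{\lfloor (n-1)/2\rfloor}$ when $j$ is odd. (ii) If $n$ is odd, then $\widehat{A}_n(q^{j},q)$ is divisible by $(1+q)^{\lfloor n/2\rfloor}$ for all $j\geq0$. In particular, $\widehat{A}_n(1,q)$ is divisible by $(1+q)^{\lfloor n/2\rfloor}$.
   Context: For $\pi=\pi_1\cdots\pi_n\in\mathfrak{S}_n$, $\widehat{D}(\pi)=\{2i:\pi_{2i}<\pi_{2i+1}\}\cup\{2i+1:\pi_{2i+1}>\pi_{2i+2}\}$ (indices in $\{1,\dots,n-1\}$), ${\rm altdes}(\pi)=|\widehat{D}(\pi)|$, ${\rm altmaj}(\pi)=\sum_{i\in\widehat{D}(\pi)}i$, and $\widehat{A}_n(t,q)=\sum_{\pi\in\mathfrak{S}_n}t^{{\rm altdes}(\pi)}q^{{\rm altmaj}(\pi)}$. *)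

theory Defs
  imports "HOL-Combinatorics.Permutations" "HOL-Computational_Algebra.Polynomial"
begin

definition altDes :: "nat \<Rightarrow> (nat \<Rightarrow> nat) \<Rightarrow> nat set" where
  "altDes n p = {i \<in> {1..n-1}. (even i \<and> p i < p (i+1)) \<or> (odd i \<and> p i > p (i+1))}"

definition altdes :: "nat \<Rightarrow> (nat \<Rightarrow> nat) \<Rightarrow> nat" where
  "altdes n p = card (altDes n p)"

definition altmaj :: "nat \<Rightarrow> (nat \<Rightarrow> nat) \<Rightarrow> nat" where
  "altmaj n p = (\<Sum>i\<in>altDes n p. i)"

definition altA :: "nat \<Rightarrow> 'a::comm_ring_1 \<Rightarrow> 'a \<Rightarrow> 'a" where
  "altA n t q = (\<Sum>p\<in>{p. p permutes {1..n}}. t ^ altdes n p * q ^ altmaj n p)"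

end

theory Submission
  imports Defs
begin

(* Let F_n be the sum over the permutations of {1..n} of the product of weights x_i over their
   alternating descents i, and let u_i and d_i be the weights that position i contributes when
   it is an ascent resp. a descent. Classifying the permutations of {1..n+1} by their last value
   gives a recurrence that solves to
     F_n = sum_{m<n} C(n,m) * prod_{m<i<n} (u_i - d_i) * d_m F_m      (with d_0 F_0 := 1).
   For x_i = q^(i+j) the factor u_i - d_i = +-(q^(i+j) - 1) is divisible by 1 + q whenever i + j
   is even, and complementing the values shows that F_n is palindromic. Induction on n then gives
   (1+q)^e | F_n, where e counts the i with 2 <= i < n and i + j even. When n + j is even this is
   one factor short of the claim; the missing factor comes from the symmetry, because the quotient
   F_n / (1+q)^e is palindromic about an odd degree and therefore vanishes at -1. *)

lemma sum_pred_choose: "(\<Sum>u\<in>{1..<v}. (u - 1) choose k) = (v - 1) choose Suc k"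
proof (cases v)
  case (Suc w)
  have "(\<Sum>u\<in>{1..<Suc w}. (u - 1) choose k) = (\<Sum>u<w. u choose k)"
    using sum.shift_bounds_Suc_ivl[of "\<lambda>u. (u - 1) choose k" 0 w]
    by (simp add: atLeast0LessThan)
  also have "\<dots> = w choose Suc k"
    by (cases w) (simp_all add: lessThan_Suc_atMost sum_choose_upper)
  finally show ?thesis using Suc by simp
qed simp

(* The permutation of {1..n+1} ending in v whose first n values are in the same relative order
   as those of p; standardize_perm is its inverse. *)
definition extend_perm :: "nat \<Rightarrow> nat \<Rightarrow> (nat \<Rightarrow> nat) \<Rightarrow> nat \<Rightarrow> nat" where
  "extend_perm n v p i =
     (if i \<in> {1..n} then (if p i < v then p i else Suc (p i)) else if i = Suc n then v else i)"

definition standardize_perm :: "nat \<Rightarrow> (nat \<Rightarrow> nat) \<Rightarrow> nat \<Rightarrow> nat" where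
  "standardize_perm n p i = (if i \<in> {1..n} then (if p i < p (Suc n) then p i else p i - 1) else i)"

lemma extend_perm_permutes:
  assumes p: "p permutes {1..n}" and v: "v \<in> {1..Suc n}"
  shows "extend_perm n v p permutes {1..Suc n}"
proof (rule inj_imp_permutes)
  show "inj_on (extend_perm n v p) {1..Suc n}"
  proof (rule inj_onI)
    fix a b
    assume "a \<in> {1..Suc n}" "b \<in> {1..Suc n}" "extend_perm n v p a = extend_perm n v p b"
    moreover have "p a = p b \<Longrightarrow> a = b" using permutes_inj[OF p] by (simp add: inj_eq)
    ultimately show "a = b" by (auto simp: extend_perm_def split: if_splits)
  qed
  show "extend_perm n v p i \<in> {1..Suc n}" if "i \<in> {1..Suc n}" for i
    using that v permutes_in_image[OF p, of i] by (auto simp: extend_perm_def)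
qed (auto simp: extend_perm_def)

lemma standardize_perm_permutes:
  assumes p: "p permutes {1..Suc n}"
  shows "standardize_perm n p permutes {1..n}"
proof (rule inj_imp_permutes)
  have last: "p (Suc n) \<in> {1..Suc n}" and ne: "i \<in> {1..n} \<Longrightarrow> p i \<noteq> p (Suc n)" for i
    using permutes_in_image[OF p] permutes_inj[OF p] by (auto simp: inj_eq)
  show "inj_on (standardize_perm n p) {1..n}"
  proof (rule inj_onI)
    fix a b
    assume "a \<in> {1..n}" "b \<in> {1..n}" "standardize_perm n p a = standardize_perm n p b"
    moreover have "p a = p b \<Longrightarrow> a = b" using permutes_inj[OF p] by (simp add: inj_eq)
    ultimately show "a = b"
      using ne[of a] ne[of b] permutes_in_image[OF p, of a] permutes_in_image[OF p, of b]
      by (auto simp: standardize_perm_def split: if_splits)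
  qed
  show "standardize_perm n p i \<in> {1..n}" if "i \<in> {1..n}" for i
    using that permutes_in_image[OF p, of i] last ne[OF that] by (auto simp: standardize_perm_def)
qed (auto simp: standardize_perm_def)

lemma bij_betw_extend_perm:
  assumes v: "v \<in> {1..Suc n}"
  shows "bij_betw (extend_perm n v) {p. p permutes {1..n}}
           {p. p permutes {1..Suc n} \<and> p (Suc n) = v}"
proof (rule bij_betw_byWitness[where f' = "standardize_perm n"])
  show "\<forall>p\<in>{p. p permutes {1..n}}. standardize_perm n (extend_perm n v p) = p"
    by (auto simp: fun_eq_iff standardize_perm_def extend_perm_def permutes_not_in)
  show "\<forall>p\<in>{p. p permutes {1..Suc n} \<and> p (Suc n) = v}. extend_perm n v (standardize_perm n p) = p"
  proof (intro ballI ext)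
    fix p i assume "p \<in> {p. p permutes {1..Suc n} \<and> p (Suc n) = v}"
    then have p: "p permutes {1..Suc n}" and pv: "p (Suc n) = v" by auto
    have "i \<in> {1..n} \<Longrightarrow> p i \<noteq> p (Suc n)" using permutes_inj[OF p] by (auto simp: inj_eq)
    then show "extend_perm n v (standardize_perm n p) i = p i"
      using pv permutes_in_image[OF p, of i] permutes_not_in[OF p, of i]
      by (auto simp: standardize_perm_def extend_perm_def)
  qed
qed (use v extend_perm_permutes standardize_perm_permutes in \<open>auto simp: extend_perm_def\<close>)

lemma sum_permutes_by_last:
  fixes n :: nat
  assumes "n \<ge> 1"
  shows "(\<Sum>p | p permutes {1..n}. f p) = (\<Sum>v\<in>{1..n}. \<Sum>p | p permutes {1..n} \<and> p n = v. f p)"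
proof -
  let ?S = "{p. p permutes {1..n}}"
  have "(\<Sum>v\<in>{1..n}. \<Sum>p\<in>{p \<in> ?S. p n = v}. f p) = sum f ?S"
  proof (rule sum.group)
    have "p n \<in> {1..n}" if "p permutes {1..n}" for p
      using permutes_in_image[OF that, of n] assms by simp
    then show "(\<lambda>p. p n) ` ?S \<subseteq> {1..n}" by auto
  qed (simp_all add: finite_permutations)
  then show ?thesis by simp
qed

definition alt_weight :: "(nat \<Rightarrow> 'a::comm_ring_1) \<Rightarrow> nat \<Rightarrow> (nat \<Rightarrow> nat) \<Rightarrow> 'a" where
  "alt_weight x n p = (\<Prod>i\<in>altDes n p. x i)"

definition alt_sum :: "(nat \<Rightarrow> 'a::comm_ring_1) \<Rightarrow> nat \<Rightarrow> 'a" where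
  "alt_sum x n = (\<Sum>p | p permutes {1..n}. alt_weight x n p)"

definition alt_sum_last :: "(nat \<Rightarrow> 'a::comm_ring_1) \<Rightarrow> nat \<Rightarrow> nat \<Rightarrow> 'a" where
  "alt_sum_last x n v = (\<Sum>p | p permutes {1..n} \<and> p n = v. alt_weight x n p)"

definition rise_weight :: "(nat \<Rightarrow> 'a::comm_ring_1) \<Rightarrow> nat \<Rightarrow> 'a" where
  "rise_weight x i = (if even i then x i else 1)"

definition fall_weight :: "(nat \<Rightarrow> 'a::comm_ring_1) \<Rightarrow> nat \<Rightarrow> 'a" where
  "fall_weight x i = (if even i then 1 else x i)"

lemma altDes_extend_perm:
  assumes n: "n \<ge> 1"
  shows "altDes (Suc n) (extend_perm n v p) = altDes n p \<union> {i. i = n \<and> (even n \<longleftrightarrow> p n < v)}"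
    (is "?L = ?R")
proof -
  have mono: "extend_perm n v p i < extend_perm n v p j \<longleftrightarrow> p i < p j"
    if "i \<in> {1..n}" "j \<in> {1..n}" for i j
    using that by (auto simp: extend_perm_def)
  have last: "extend_perm n v p n < extend_perm n v p (Suc n) \<longleftrightarrow> p n < v"
    "extend_perm n v p (Suc n) < extend_perm n v p n \<longleftrightarrow> \<not> p n < v"
    using n by (auto simp: extend_perm_def)
  show ?thesis
  proof (intro set_eqI)
    fix i
    show "i \<in> ?L \<longleftrightarrow> i \<in> ?R"
    proof (cases "i \<in> {1..n-1}")
      case True
      then have "i \<in> {1..n}" "Suc i \<in> {1..n}" by auto
      then show ?thesis
        using True mono[of i "Suc i"] mono[of "Suc i" i] by (auto simp: altDes_def)
    next
      case False
      then show ?thesis using last n by (cases "i = n") (auto simp: altDes_def)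
    qed
  qed
qed

lemma alt_weight_extend_perm:
  assumes "n \<ge> 1"
  shows "alt_weight x (Suc n) (extend_perm n v p) =
           alt_weight x n p * (if p n < v then rise_weight x n else fall_weight x n)"
proof -
  have "n \<notin> altDes n p" and "finite (altDes n p)"
    by (auto simp: altDes_def)
  then show ?thesis
    by (auto simp: alt_weight_def altDes_extend_perm[OF assms] rise_weight_def fall_weight_def mult.commute)
qed

lemma alt_sum_eq_sum_last: "n \<ge> 1 \<Longrightarrow> alt_sum x n = (\<Sum>v\<in>{1..n}. alt_sum_last x n v)"
  unfolding alt_sum_def alt_sum_last_def by (rule sum_permutes_by_last)

lemma alt_sum_last_one: "alt_sum_last x 1 1 = 1"
proof -
  have "{p. p permutes {1..1::nat} \<and> p 1 = 1} = {id}" and "altDes 1 id = {}"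
    by (auto simp: altDes_def)
  then show ?thesis by (simp add: alt_sum_last_def alt_weight_def)
qed

lemma alt_sum_last_Suc:
  assumes v: "v \<in> {1..Suc n}" and n: "n \<ge> 1"
  shows "alt_sum_last x (Suc n) v =
           (\<Sum>u\<in>{1..n}. alt_sum_last x n u * (if u < v then rise_weight x n else fall_weight x n))"
proof -
  let ?w = "\<lambda>p. alt_weight x n p * (if p n < v then rise_weight x n else fall_weight x n)"
  have "alt_sum_last x (Suc n) v = (\<Sum>p | p permutes {1..n}. alt_weight x (Suc n) (extend_perm n v p))"
    unfolding alt_sum_last_def by (rule sum.reindex_bij_betw[OF bij_betw_extend_perm[OF v], symmetric])
  also have "\<dots> = (\<Sum>p | p permutes {1..n}. ?w p)"
    by (simp add: alt_weight_extend_perm[OF n])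
  also have "\<dots> = (\<Sum>u\<in>{1..n}. \<Sum>p | p permutes {1..n} \<and> p n = u. ?w p)"
    by (rule sum_permutes_by_last[OF n])
  also have "\<dots> = (\<Sum>u\<in>{1..n}. alt_sum_last x n u * (if u < v then rise_weight x n else fall_weight x n))"
    unfolding alt_sum_last_def sum_distrib_right by (intro sum.cong refl) auto
  finally show ?thesis .
qed

definition rise_fall_prod :: "(nat \<Rightarrow> 'a::comm_ring_1) \<Rightarrow> nat \<Rightarrow> nat \<Rightarrow> 'a" where
  "rise_fall_prod x m n = (\<Prod>i\<in>{m<..<n}. rise_weight x i - fall_weight x i)"

definition alt_prefix :: "(nat \<Rightarrow> 'a::comm_ring_1) \<Rightarrow> nat \<Rightarrow> 'a" where
  "alt_prefix x m = (if m = 0 then 1 else fall_weight x m * alt_sum x m)"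

lemma rise_fall_prod_Suc:
  "m < n \<Longrightarrow> rise_fall_prod x m (Suc n) = (rise_weight x n - fall_weight x n) * rise_fall_prod x m n"
proof -
  assume "m < n"
  then have "{m<..<Suc n} = insert n {m<..<n}" by auto
  then show ?thesis by (simp add: rise_fall_prod_def)
qed

lemma rise_fall_prod_Suc_self: "rise_fall_prod x m (Suc m) = 1"
proof -
  have "{m<..<Suc m} = {}" by auto
  then show ?thesis by (simp add: rise_fall_prod_def)
qed

lemma alt_sum_last_Suc_split:
  assumes v: "v \<in> {1..Suc n}" and n: "n \<ge> 1"
  shows "alt_sum_last x (Suc n) v = fall_weight x n * alt_sum x n +
           (rise_weight x n - fall_weight x n) * (\<Sum>u\<in>{1..<v}. alt_sum_last x n u)"
proof -
  have "alt_sum_last x (Suc n) v = (\<Sum>u\<in>{1..n}. fall_weight x n * alt_sum_last x n u +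
      (if u \<in> {1..<v} then (rise_weight x n - fall_weight x n) * alt_sum_last x n u else 0))"
    unfolding alt_sum_last_Suc[OF v n] by (intro sum.cong refl) (auto simp: algebra_simps)
  also have "\<dots> = fall_weight x n * alt_sum x n +
      (\<Sum>u\<in>{1..n} \<inter> {1..<v}. (rise_weight x n - fall_weight x n) * alt_sum_last x n u)"
    by (simp add: sum.distrib sum.inter_restrict alt_sum_eq_sum_last[OF n] sum_distrib_left)
  also have "{1..n} \<inter> {1..<v} = {1..<v}"
    using v by auto
  finally show ?thesis by (simp add: sum_distrib_left)
qed

lemma alt_sum_last_expansion:
  assumes "n \<ge> 1" and "v \<in> {1..n}"
  shows "alt_sum_last x n v =
           (\<Sum>m<n. of_nat ((v - 1) choose (n - 1 - m)) * rise_fall_prod x m n * alt_prefix x m)"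
  using assms
proof (induction n arbitrary: v rule: nat_induct_at_least)
  case base
  then show ?case
    using alt_sum_last_one[of x] by (simp add: rise_fall_prod_Suc_self alt_prefix_def)
next
  case (Suc n)
  let ?T = "\<lambda>m. rise_fall_prod x m n * alt_prefix x m"
  have v: "v \<in> {1..Suc n}" using Suc.prems by simp
  have "(\<Sum>u\<in>{1..<v}. alt_sum_last x n u) =
      (\<Sum>u\<in>{1..<v}. \<Sum>m<n. of_nat ((u - 1) choose (n - 1 - m)) * ?T m)"
    using v by (intro sum.cong refl) (simp add: Suc.IH mult.assoc)
  also have "\<dots> = (\<Sum>m<n. of_nat (\<Sum>u\<in>{1..<v}. (u - 1) choose (n - 1 - m)) * ?T m)"
    by (subst sum.swap) (simp only: of_nat_sum sum_distrib_right)
  also have "\<dots> = (\<Sum>m<n. of_nat ((v - 1) choose (n - m)) * ?T m)"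
  proof (intro sum.cong refl)
    fix m assume "m \<in> {..<n}"
    then have "Suc (n - 1 - m) = n - m" by auto
    then show "of_nat (\<Sum>u\<in>{1..<v}. (u - 1) choose (n - 1 - m)) * ?T m =
        of_nat ((v - 1) choose (n - m)) * ?T m"
      by (simp only: sum_pred_choose)
  qed
  finally have S: "(\<Sum>u\<in>{1..<v}. alt_sum_last x n u) = (\<Sum>m<n. of_nat ((v - 1) choose (n - m)) * ?T m)" .
  have "(rise_weight x n - fall_weight x n) * (\<Sum>u\<in>{1..<v}. alt_sum_last x n u) =
      (\<Sum>m<n. of_nat ((v - 1) choose (n - m)) * rise_fall_prod x m (Suc n) * alt_prefix x m)"
    unfolding S sum_distrib_left by (intro sum.cong refl) (simp add: rise_fall_prod_Suc mult_ac)
  then have "alt_sum_last x (Suc n) v = fall_weight x n * alt_sum x n +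
      (\<Sum>m<n. of_nat ((v - 1) choose (n - m)) * rise_fall_prod x m (Suc n) * alt_prefix x m)"
    by (simp add: alt_sum_last_Suc_split[OF v Suc.hyps])
  moreover have "rise_fall_prod x n (Suc n) * alt_prefix x n = fall_weight x n * alt_sum x n"
    using Suc.hyps by (simp add: rise_fall_prod_Suc_self alt_prefix_def)
  ultimately show ?case by simp
qed

lemma alt_sum_expansion:
  assumes n: "n \<ge> 1"
  shows "alt_sum x n = (\<Sum>m<n. of_nat (n choose m) * rise_fall_prod x m n * alt_prefix x m)"
proof -
  let ?T = "\<lambda>m. rise_fall_prod x m n * alt_prefix x m"
  have "alt_sum x n = (\<Sum>v\<in>{1..<Suc n}. \<Sum>m<n. of_nat ((v - 1) choose (n - 1 - m)) * ?T m)"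
    unfolding alt_sum_eq_sum_last[OF n]
    by (intro sum.cong) (auto simp: alt_sum_last_expansion[OF n] mult.assoc)
  also have "\<dots> = (\<Sum>m<n. of_nat (\<Sum>v\<in>{1..<Suc n}. (v - 1) choose (n - 1 - m)) * ?T m)"
    by (subst sum.swap) (simp only: of_nat_sum sum_distrib_right)
  also have "\<dots> = (\<Sum>m<n. of_nat (n choose m) * ?T m)"
  proof (intro sum.cong refl)
    fix m assume "m \<in> {..<n}"
    then have "Suc (n - 1 - m) = n - m" and "m \<le> n" by auto
    then show "of_nat (\<Sum>v\<in>{1..<Suc n}. (v - 1) choose (n - 1 - m)) * ?T m = of_nat (n choose m) * ?T m"
      by (simp only: sum_pred_choose diff_Suc_1 binomial_symmetric[symmetric])
  qed
  finally show ?thesis by (simp add: mult.assoc)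
qed

(* For degree p <= N this is q^N p(1/q), so p is palindromic about N iff reflect_at N p = p. *)
definition reflect_at :: "nat \<Rightarrow> 'a::comm_ring_1 poly \<Rightarrow> 'a poly" where
  "reflect_at N p = (\<Sum>i\<le>N. monom (coeff p i) (N - i))"

lemma reflect_at_add: "reflect_at N (p + q) = reflect_at N p + reflect_at N q"
  by (simp add: reflect_at_def sum.distrib add_monom[symmetric])

lemma reflect_at_sum: "finite A \<Longrightarrow> reflect_at N (\<Sum>a\<in>A. f a) = (\<Sum>a\<in>A. reflect_at N (f a))"
  by (induction A rule: finite_induct) (simp_all add: reflect_at_add, simp add: reflect_at_def)

lemma reflect_at_monom:
  assumes "e \<le> N"
  shows "reflect_at N (monom a e) = monom a (N - e)"
proof -
  have "reflect_at N (monom a e) = (\<Sum>i\<le>N. if i = e then monom a (N - e) else 0)"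
    unfolding reflect_at_def by (intro sum.cong refl) (auto simp: coeff_monom)
  then show ?thesis using assms by simp
qed

lemma reflect_at_Suc:
  assumes "degree p \<le> N"
  shows "reflect_at (Suc N) p = [:0, 1:] * reflect_at N p"
proof -
  have "coeff p (Suc N) = 0"
    using assms by (simp add: coeff_eq_0)
  then have "reflect_at (Suc N) p = (\<Sum>i\<le>N. monom (coeff p i) (Suc N - i))"
    by (simp add: reflect_at_def)
  also have "\<dots> = (\<Sum>i\<le>N. [:0, 1:] * monom (coeff p i) (N - i))"
    by (intro sum.cong refl) (simp add: Suc_diff_le monom_Suc)
  also have "\<dots> = [:0, 1:] * reflect_at N p"
    by (simp only: reflect_at_def sum_distrib_left)
  finally show ?thesis .
qed

lemma reflect_at_times_X: "reflect_at (Suc N) ([:0, 1:] * p) = reflect_at N p"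
  unfolding reflect_at_def by (subst sum.atMost_Suc_shift) simp

lemma reflect_at_mult_power:
  assumes "degree p \<le> N"
  shows "reflect_at (k + N) ([:1, 1:] ^ k * p) = [:1, 1:] ^ k * reflect_at N p"
proof (induction k)
  case (Suc k)
  let ?q = "[:1, 1:] ^ k * p"
  have "degree ([:1, 1:] ^ k :: 'a poly) \<le> k"
    using degree_power_le[of "[:1, 1:]" k] by simp
  then have deg: "degree ?q \<le> k + N"
    using degree_mult_le[of "[:1, 1:] ^ k" p] assms by linarith
  have times_1X: "[:1, 1:] * r = r + [:0, 1:] * r" for r :: "'a poly"
    by simp
  have step: "reflect_at (Suc (k + N)) ([:1, 1:] * ?q) = [:1, 1:] * reflect_at (k + N) ?q"
    unfolding times_1X reflect_at_add reflect_at_Suc[OF deg] reflect_at_times_X by (rule add.commute)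
  show ?case
    by (simp only: power_Suc mult.assoc add_Suc step Suc.IH)
qed simp

lemma poly_reflect_at_minus_one:
  assumes "degree p \<le> N"
  shows "poly (reflect_at N p) (-1) = (-1) ^ N * poly p (-1)"
proof -
  have "poly (reflect_at N p) (-1) = (\<Sum>i\<le>N. (-1) ^ N * (coeff p i * (-1) ^ i))"
    unfolding reflect_at_def poly_sum poly_monom
    by (intro sum.cong refl) (auto simp: minus_one_power_iff)
  also have "\<dots> = (-1) ^ N * poly p (-1)"
    using assms by (simp add: poly_altdef sum_distrib_left sum.mono_neutral_right coeff_eq_0)
  finally show ?thesis .
qed

lemma palindromic_dvd_Suc:
  fixes F :: "'a::{idom, ring_char_0} poly"
  assumes "degree F \<le> N" and "reflect_at N F = F"
    and "[:1, 1:] ^ k dvd F" and "odd (N + k)"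
  shows "[:1, 1:] ^ Suc k dvd F"
proof -
  obtain G where F: "F = [:1, 1:] ^ k * G"
    using assms(3) by (elim dvdE)
  show ?thesis
  proof (cases "G = 0")
    case False
    then have "degree F = k + degree G"
      by (simp add: F degree_mult_eq degree_power_eq)
    then have k: "k \<le> N" and G_deg: "degree G \<le> N - k"
      using assms(1) by auto
    have "[:1, 1:] ^ k * reflect_at (N - k) G = [:1, 1:] ^ k * G"
      using reflect_at_mult_power[OF G_deg, of k] assms(2) k by (simp add: F)
    then have "reflect_at (N - k) G = G" by simp
    moreover have "odd (N - k)"
      using assms(4) k by simp
    ultimately have "poly G (-1) = - poly G (-1)"
      using poly_reflect_at_minus_one[OF G_deg] by simp
    then have "poly G (-1) + poly G (-1) = 0"
      by (simp only: eq_neg_iff_add_eq_0)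
    then have "2 * poly G (-1) = 0"
      by (simp only: mult_2)
    then have "poly G (-1) = 0"
      by simp
    then have "[:1, 1:] dvd G"
      by (simp add: poly_eq_0_iff_dvd)
    then have "[:1, 1:] ^ k * [:1, 1:] dvd [:1, 1:] ^ k * G"
      by (rule mult_dvd_mono[OF dvd_refl])
    then show ?thesis
      by (simp only: F power_Suc2)
  qed (simp add: F)
qed

lemma power_card_dvd_prod:
  assumes "finite A" and "\<And>a. a \<in> A \<Longrightarrow> P a \<Longrightarrow> d dvd f a"
  shows "d ^ card {a \<in> A. P a} dvd (\<Prod>a\<in>A. f a)"
proof -
  have "d ^ card {a \<in> A. P a} = (\<Prod>a\<in>{a \<in> A. P a}. d)"
    by simp
  also have "\<dots> dvd (\<Prod>a\<in>{a \<in> A. P a}. f a)"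
    by (rule prod_dvd_prod) (use assms(2) in auto)
  also have "\<dots> dvd (\<Prod>a\<in>A. f a)"
    by (rule prod_dvd_prod_subset) (use assms(1) in auto)
  finally show ?thesis .
qed

(* Under t = q^j the weight t^altdes q^altmaj is the product of t q^i over the alternating
   descents i. *)
definition tq_weight :: "nat \<Rightarrow> nat \<Rightarrow> 'a::comm_ring_1 poly" where
  "tq_weight j i = [:0, 1:] ^ (i + j)"

definition shifted_maj :: "nat \<Rightarrow> nat \<Rightarrow> (nat \<Rightarrow> nat) \<Rightarrow> nat" where
  "shifted_maj j n p = (\<Sum>i\<in>altDes n p. i + j)"

definition shifted_maj_max :: "nat \<Rightarrow> nat \<Rightarrow> nat" where
  "shifted_maj_max j n = (\<Sum>i\<in>{1..n-1}. i + j)"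

lemma alt_weight_tq_weight: "alt_weight (tq_weight j) n p = monom 1 (shifted_maj j n p)"
  by (simp add: alt_weight_def tq_weight_def shifted_maj_def power_sum[symmetric] monom_altdef)

lemma altA_eq_alt_sum: "altA n ([:0, 1:] ^ j) [:0, 1:] = alt_sum (tq_weight j) n"
proof -
  have weight: "([:0, 1:] ^ j) ^ altdes n p * [:0, 1:] ^ altmaj n p = alt_weight (tq_weight j) n p" for p
  proof -
    have "shifted_maj j n p = j * altdes n p + altmaj n p"
      by (simp add: shifted_maj_def sum.distrib altdes_def altmaj_def)
    have "([:0, 1:] ^ j) ^ altdes n p * [:0, 1:] ^ altmaj n p = [:0, 1:] ^ (j * altdes n p + altmaj n p)"
      by (simp only: power_add power_mult)
    also have "\<dots> = alt_weight (tq_weight j) n p"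
      using \<open>shifted_maj j n p = j * altdes n p + altmaj n p\<close>
      by (simp add: alt_weight_tq_weight monom_altdef)
    finally show ?thesis .
  qed
  then show ?thesis
    by (simp only: altA_def alt_sum_def weight)
qed

definition complement_perm :: "nat \<Rightarrow> (nat \<Rightarrow> nat) \<Rightarrow> nat \<Rightarrow> nat" where
  "complement_perm n p i = (if i \<in> {1..n} then Suc n - p i else i)"

lemma complement_perm_permutes:
  assumes p: "p permutes {1..n}"
  shows "complement_perm n p permutes {1..n}"
proof (rule inj_imp_permutes)
  show "inj_on (complement_perm n p) {1..n}"
  proof (rule inj_onI)
    fix a b
    assume "a \<in> {1..n}" "b \<in> {1..n}" "complement_perm n p a = complement_perm n p b"
    then have "p a = p b"
      using permutes_in_image[OF p, of a] permutes_in_image[OF p, of b] by (auto simp: complement_perm_def)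
    then show "a = b" using permutes_inj[OF p] by (simp add: inj_eq)
  qed
  show "complement_perm n p i \<in> {1..n}" if "i \<in> {1..n}" for i
    using that permutes_in_image[OF p, of i] by (auto simp: complement_perm_def)
qed (auto simp: complement_perm_def)

lemma complement_perm_complement_perm:
  assumes p: "p permutes {1..n}"
  shows "complement_perm n (complement_perm n p) = p"
proof
  fix i
  show "complement_perm n (complement_perm n p) i = p i"
    using permutes_in_image[OF p, of i] permutes_not_in[OF p, of i] by (auto simp: complement_perm_def)
qed

lemma bij_betw_complement_perm:
  "bij_betw (complement_perm n) {p. p permutes {1..n}} {p. p permutes {1..n}}"
  by (rule bij_betw_byWitness[where f' = "complement_perm n"])
     (use complement_perm_complement_perm complement_perm_permutes in blast)+

lemma altDes_complement_perm:
  assumes p: "p permutes {1..n}"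
  shows "altDes n (complement_perm n p) = {1..n-1} - altDes n p"
proof (rule set_eqI)
  fix i
  show "i \<in> altDes n (complement_perm n p) \<longleftrightarrow> i \<in> {1..n-1} - altDes n p"
  proof (cases "i \<in> {1..n-1}")
    case True
    then have i: "i \<in> {1..n}" "Suc i \<in> {1..n}" by auto
    have "p i \<noteq> p (Suc i)"
      using permutes_inj[OF p] by (simp add: inj_eq)
    moreover have "complement_perm n p i < complement_perm n p (Suc i) \<longleftrightarrow> p (Suc i) < p i"
      "complement_perm n p (Suc i) < complement_perm n p i \<longleftrightarrow> p i < p (Suc i)"
      using i permutes_in_image[OF p, of i] permutes_in_image[OF p, of "Suc i"]
      by (auto simp: complement_perm_def)
    ultimately show ?thesis
      using True by (auto simp: altDes_def)
  qed (auto simp: altDes_def)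
qed

lemma shifted_maj_le: "shifted_maj j n p \<le> shifted_maj_max j n"
  unfolding shifted_maj_def shifted_maj_max_def by (rule sum_mono2) (auto simp: altDes_def)

lemma shifted_maj_complement_perm:
  assumes "p permutes {1..n}"
  shows "shifted_maj j n (complement_perm n p) = shifted_maj_max j n - shifted_maj j n p"
  unfolding shifted_maj_def shifted_maj_max_def altDes_complement_perm[OF assms]
  by (rule sum_diff_nat) (auto simp: altDes_def)

lemma degree_alt_sum_tq_weight: "degree (alt_sum (tq_weight j) n) \<le> shifted_maj_max j n"
  unfolding alt_sum_def alt_weight_tq_weight
  by (rule degree_sum_le)
     (auto intro: order.trans[OF degree_monom_le shifted_maj_le] simp: finite_permutations)

lemma reflect_at_alt_sum_tq_weight:
  "reflect_at (shifted_maj_max j n) (alt_sum (tq_weight j) n) = alt_sum (tq_weight j) n"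
proof -
  let ?S = "{p. p permutes {1..n}}"
  have "reflect_at (shifted_maj_max j n) (alt_sum (tq_weight j) n) =
      (\<Sum>p\<in>?S. monom 1 (shifted_maj j n (complement_perm n p)))"
    unfolding alt_sum_def alt_weight_tq_weight
    by (simp add: reflect_at_sum finite_permutations reflect_at_monom shifted_maj_le
        shifted_maj_complement_perm)
  also have "\<dots> = alt_sum (tq_weight j) n"
    unfolding alt_sum_def alt_weight_tq_weight
    by (rule sum.reindex_bij_betw[OF bij_betw_complement_perm])
  finally show ?thesis .
qed

lemma rise_fall_tq_weight_dvd:
  assumes "even (i + j)"
  shows "[:1, 1:] dvd rise_weight (tq_weight j) i - fall_weight (tq_weight j) i"
proof -
  have "poly (rise_weight (tq_weight j) i - fall_weight (tq_weight j) i) (-1) = 0"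
    using assms by (simp add: rise_weight_def fall_weight_def tq_weight_def)
  then show ?thesis
    by (simp only: poly_eq_0_iff_dvd minus_minus)
qed

definition alt_dvd_exp :: "nat \<Rightarrow> nat \<Rightarrow> nat" where
  "alt_dvd_exp j n = card {i \<in> {2..n}. even (i + j)}"

lemma alt_dvd_exp_Suc:
  assumes "n \<ge> 1"
  shows "alt_dvd_exp j (Suc n) = alt_dvd_exp j n + (if even (Suc n + j) then 1 else 0)"
proof -
  have "{i \<in> {2..Suc n}. even (i + j)} =
      (if even (Suc n + j) then insert (Suc n) else id) {i \<in> {2..n}. even (i + j)}"
    using assms by (auto simp: le_Suc_eq)
  then show ?thesis
    by (simp add: alt_dvd_exp_def)
qed

lemma alt_dvd_exp_eq: "alt_dvd_exp j n = (if even j then n else n - 1) div 2"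
proof (induction n)
  case (Suc n)
  show ?case
  proof (cases "n = 0")
    case False
    then show ?thesis
      using Suc.IH by (simp add: alt_dvd_exp_Suc) presburger
  qed (simp add: alt_dvd_exp_def)
qed (simp add: alt_dvd_exp_def)

lemma even_shifted_maj_max_add_alt_dvd_exp:
  assumes "n \<ge> 2"
  shows "even (shifted_maj_max j n + alt_dvd_exp j (n - 1)) \<longleftrightarrow> odd (n + j)"
  using assms
proof (induction n rule: nat_induct_at_least)
  case base
  then show ?case by (simp add: shifted_maj_max_def alt_dvd_exp_def)
next
  case (Suc n)
  have "{1..Suc n - 1} = insert n {1..n - 1}"
    using Suc.hyps by auto
  then have "shifted_maj_max j (Suc n) = shifted_maj_max j n + (n + j)"
    using Suc.hyps by (simp add: shifted_maj_max_def)
  moreover have "alt_dvd_exp j n = alt_dvd_exp j (n - 1) + (if even (n + j) then 1 else 0)"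
    using alt_dvd_exp_Suc[of "n - 1" j] Suc.hyps by simp
  ultimately show ?case
    using Suc.IH by simp presburger
qed

lemma power_alt_dvd_exp_dvd_expansion_term:
  fixes X :: "'a::{idom, ring_char_0} poly"
  defines "X \<equiv> [:1, 1:]"
  assumes "m < n" and "X ^ alt_dvd_exp j m dvd alt_sum (tq_weight j) m"
  shows "X ^ alt_dvd_exp j (n - 1) dvd rise_fall_prod (tq_weight j) m n * alt_prefix (tq_weight j) m"
proof -
  let ?E = "{i \<in> {m<..<n}. even (i + j)}"
  have "alt_dvd_exp j (n - 1) \<le> card (?E \<union> {i \<in> {2..m}. even (i + j)})"
    unfolding alt_dvd_exp_def by (intro card_mono) auto
  also have "\<dots> \<le> card ?E + alt_dvd_exp j m"
    unfolding alt_dvd_exp_def by (rule card_Un_le)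
  finally have "X ^ alt_dvd_exp j (n - 1) dvd X ^ card ?E * X ^ alt_dvd_exp j m"
    unfolding power_add[symmetric] by (rule le_imp_power_dvd)
  also have "\<dots> dvd rise_fall_prod (tq_weight j) m n * alt_prefix (tq_weight j) m"
  proof (rule mult_dvd_mono)
    show "X ^ card ?E dvd rise_fall_prod (tq_weight j) m n"
      unfolding rise_fall_prod_def X_def
      by (rule power_card_dvd_prod) (simp_all add: rise_fall_tq_weight_dvd)
    show "X ^ alt_dvd_exp j m dvd alt_prefix (tq_weight j) m"
    proof (cases "m = 0")
      case False
      then show ?thesis
        using dvd_mult[OF assms(3)] by (simp add: alt_prefix_def)
    qed (simp add: alt_prefix_def alt_dvd_exp_def)
  qed
  finally show ?thesis .
qed

lemma power_alt_dvd_exp_dvd_alt_sum: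
  "([:1, 1:] :: 'a::{idom, ring_char_0} poly) ^ alt_dvd_exp j n dvd alt_sum (tq_weight j) n"
proof (induction n rule: less_induct)
  case (less n)
  show ?case
  proof (cases "n = 0")
    case False
    then have "n \<ge> 1" by simp
    define T where "T = alt_dvd_exp j (n - 1)"
    have "([:1, 1:] :: 'a poly) ^ T dvd
        of_nat (n choose m) * rise_fall_prod (tq_weight j) m n * alt_prefix (tq_weight j) m"
      if "m < n" for m
      unfolding mult.assoc T_def
      by (rule dvd_mult) (rule power_alt_dvd_exp_dvd_expansion_term[OF that less.IH[OF that]])
    then have T: "([:1, 1:] :: 'a poly) ^ T dvd alt_sum (tq_weight j) n"
      unfolding alt_sum_expansion[OF \<open>n \<ge> 1\<close>] by (intro dvd_sum) simp
    show ?thesis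
    proof (cases "2 \<le> n \<and> even (n + j)")
      case True
      then have "1 \<le> n - 1" and "Suc (n - 1) = n"
        by auto
      then have "alt_dvd_exp j n = Suc T"
        using alt_dvd_exp_Suc[of "n - 1" j] True by (simp add: T_def)
      moreover have "odd (shifted_maj_max j n + T)"
        using even_shifted_maj_max_add_alt_dvd_exp[of n j] True by (simp add: T_def)
      ultimately show ?thesis
        using palindromic_dvd_Suc[OF degree_alt_sum_tq_weight reflect_at_alt_sum_tq_weight T] by simp
    next
      case False
      then have "alt_dvd_exp j n = T"
        using alt_dvd_exp_Suc[of "n - 1" j] \<open>n \<noteq> 0\<close>
        by (cases "n = 1") (auto simp: T_def alt_dvd_exp_def)
      then show ?thesis using T by simp
    qed
  qed (simp add: alt_dvd_exp_def)
qed

theorem theorem4p5: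
  fixes n j :: nat
  assumes "n \<ge> 1"
  defines "q \<equiv> [:0, 1:] :: int poly"
  shows "(even n \<longrightarrow>
            (even j \<longrightarrow> (1 + q) ^ (n div 2) dvd altA n (q ^ j) q) \<and>
            (odd j \<longrightarrow> (1 + q) ^ ((n - 1) div 2) dvd altA n (q ^ j) q)) \<and>
         (odd n \<longrightarrow> (1 + q) ^ (n div 2) dvd altA n (q ^ j) q) \<and>
         (1 + q) ^ (n div 2) dvd altA n 1 q"
proof -
  have dvd: "(1 + q) ^ ((if even c then n else n - 1) div 2) dvd altA n (q ^ c) q" for c
    using power_alt_dvd_exp_dvd_alt_sum[of c n]
    by (simp add: q_def altA_eq_alt_sum alt_dvd_exp_eq one_pCons)
  have "odd n \<Longrightarrow> (n - 1) div 2 = n div 2"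
    by (auto elim: oddE)
  then show ?thesis
    using dvd[of j] dvd[of 0] by auto
qed

end
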